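(* Let $F(V)$ be the set of formulas of the logic $\mathrm{q}\L^{*}$. For every $p\in F(V)$, if $\vdash p$ (i.e. $p$ is a theorem of $\mathrm{q}\L^{*}$), then $\models p$ (i.e. $p$ is a tautology).
   Context: Let $V=\{p_1,p_2,\ldots\}$ be a set of propositional variables and $F(V)$ the set of formulas built from $V$ and the constant $1$ with the binary connective $\to$ and the unary connectives $\neg$, ${}^{+}$, ${}^{-}$ (postfix ${}^+,{}^-$ bind tighter than $\neg$, which binds tighter than $\to$). Abbreviations: $p\vee q:=((p^{+}\to q^{+})^{+}\to(\neg p)^{-})\to((q^{-}\to p^{-})^{-}\to p^{-})$; an axiom written $A\leftrightarrow B$ stands for the two axioms $A\to B$ and $B\to A$. Axiom schemas of $\mathrm{q}\L^{*}$ (for all formulas $p,q,r$): (Q1) $(p\to q)\leftrightarrow(\neg q\to\neg p)$; (Q2) $1\leftrightarrow((1\to p)\to 1)$; (Q3) $p\leftrightarrow((q\to q)\to p)$; (Q4) $(p\to q)\leftrightarrow((q^{+}\to p^{-})\to(p^{+}\to q^{-}))$; (Q5) $\neg(p\to q)\leftrightarrow(q\to p)$; (Q6) $(p\to(\neg p\to q))^{+}\leftrightarrow(p^{+}\to(\neg p^{+}\to q^{+}))$; (Q7) $(p\to(q\vee r))\leftrightarrow((p\to r)\vee(p\to q))$; (Q8) $(p\vee(q\vee r))\leftrightarrow((p\vee q)\vee r)$; (Q9) $((p\to 1)\to((q\to 1)\to r))\to((q\to 1)\to((p\to 1)\to r))$; (Q10) $p\to 1$; (Q11) $((1\to 1)\to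 p^{+})\leftrightarrow((p\to 1)\to 1)$ and $((1\to 1)\to p^{-})\leftrightarrow((p\to\neg 1)\to\neg 1)$. Deduction rules: (R1) from $p$ and $p\to q$ infer $(r\to r)\to q$; (R2) from $(r\to r)\to(p\to q)$ infer $p\to q$; (R3) from $p\to q$ and $r\to t$ infer $(q\to r)\to(p\to t)$. A proof of $q_n$ is a finite sequence $q_1,\dots,q_n$ each of which is an axiom or obtained from earlier members by a rule; then we write $\vdash q_n$. A valuation is a map $v^{*}:F(V)\to[-1,1]\times[-1,1]$ such that for all $p,q$, writing $v^{*}(p)=\langle a,b\rangle$ and $v^{*}(q)=\langle c,d\rangle$: $v^{*}(1)=\langle 1,0\rangle$; $v^{*}(\neg p)=\langle -a,-b\rangle$; $v^{*}(p\to q)=\langle\min\{1,\max\{-1,c-a\}\},0\rangle$; $v^{*}(p^{+})=\langle\max\{0,a\},b\rangle$ and $v^{*}(p^{-})=\langle\min\{0,a\},b\rangle$. A formula $p$ is a tautology, written $\models p$, if $v^{*}(p)\in[0,1]\times[0,1]$ for every valuation $v^{*}$. *)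

theory Defs
  imports Complex_Main
begin

datatype fm = Var nat | One | Imp fm fm | Neg fm | Pls fm | Mns fm

definition Disj :: "fm \<Rightarrow> fm \<Rightarrow> fm" where
  "Disj p q = Imp (Imp (Pls (Imp (Pls p) (Pls q))) (Mns (Neg p)))
                  (Imp (Mns (Imp (Mns q) (Mns p))) (Mns p))"

inductive axiom :: "fm \<Rightarrow> bool" where
  Q1a: "axiom (Imp (Imp p q) (Imp (Neg q) (Neg p)))"
| Q1b: "axiom (Imp (Imp (Neg q) (Neg p)) (Imp p q))"
| Q2a: "axiom (Imp One (Imp (Imp One p) One))"
| Q2b: "axiom (Imp (Imp (Imp One p) One) One)"
| Q3a: "axiom (Imp p (Imp (Imp q q) p))"
| Q3b: "axiom (Imp (Imp (Imp q q) p) p)"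
| Q4a: "axiom (Imp (Imp p q) (Imp (Imp (Pls q) (Mns p)) (Imp (Pls p) (Mns q))))"
| Q4b: "axiom (Imp (Imp (Imp (Pls q) (Mns p)) (Imp (Pls p) (Mns q))) (Imp p q))"
| Q5a: "axiom (Imp (Neg (Imp p q)) (Imp q p))"
| Q5b: "axiom (Imp (Imp q p) (Neg (Imp p q)))"
| Q6a: "axiom (Imp (Pls (Imp p (Imp (Neg p) q))) (Imp (Pls p) (Imp (Neg (Pls p)) (Pls q))))"
| Q6b: "axiom (Imp (Imp (Pls p) (Imp (Neg (Pls p)) (Pls q))) (Pls (Imp p (Imp (Neg p) q))))"
| Q7a: "axiom (Imp (Imp p (Disj q r)) (Disj (Imp p r) (Imp p q)))"
| Q7b: "axiom (Imp (Disj (Imp p r) (Imp p q)) (Imp p (Disj q r)))"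
| Q8a: "axiom (Imp (Disj p (Disj q r)) (Disj (Disj p q) r))"
| Q8b: "axiom (Imp (Disj (Disj p q) r) (Disj p (Disj q r)))"
| Q9: "axiom (Imp (Imp (Imp p One) (Imp (Imp q One) r)) (Imp (Imp q One) (Imp (Imp p One) r)))"
| Q10: "axiom (Imp p One)"
| Q11a: "axiom (Imp (Imp (Imp One One) (Pls p)) (Imp (Imp p One) One))"
| Q11b: "axiom (Imp (Imp (Imp p One) One) (Imp (Imp One One) (Pls p)))"
| Q11c: "axiom (Imp (Imp (Imp One One) (Mns p)) (Imp (Imp p (Neg One)) (Neg One)))"
| Q11d: "axiom (Imp (Imp (Imp p (Neg One)) (Neg One)) (Imp (Imp One One) (Mns p)))"

inductive provable :: "fm \<Rightarrow> bool" where
  ax: "axiom p \<Longrightarrow> provable p"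
| R1: "provable p \<Longrightarrow> provable (Imp p q) \<Longrightarrow> provable (Imp (Imp r r) q)"
| R2: "provable (Imp (Imp r r) (Imp p q)) \<Longrightarrow> provable (Imp p q)"
| R3: "provable (Imp p q) \<Longrightarrow> provable (Imp r t) \<Longrightarrow> provable (Imp (Imp q r) (Imp p t))"

definition valuation :: "(fm \<Rightarrow> real \<times> real) \<Rightarrow> bool" where
  "valuation v \<longleftrightarrow>
     (\<forall>p. fst (v p) \<in> {-1..1} \<and> snd (v p) \<in> {-1..1}) \<and>
     v One = (1, 0) \<and>
     (\<forall>p. v (Neg p) = (- fst (v p), - snd (v p))) \<and>
     (\<forall>p q. v (Imp p q) = (min 1 (max (-1) (fst (v q) - fst (v p))), 0)) \<and>
     (\<forall>p. v (Pls p) = (max 0 (fst (v p)), snd (v p))) \<and>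
     (\<forall>p. v (Mns p) = (min 0 (fst (v p)), snd (v p)))"

definition tautology :: "fm \<Rightarrow> bool" where
  "tautology p \<longleftrightarrow> (\<forall>v. valuation v \<longrightarrow> fst (v p) \<in> {0..1} \<and> snd (v p) \<in> {0..1})"

end

theory Submission
  imports Defs
begin

(* The first component of a valuation is all that matters: an implication p -> q always
   gets second component 0 and first component the difference v q - v p clipped to [-1, 1],
   so it is a tautology exactly when v p <= v q.  Every axiom is such an implication, and
   for (Q1)-(Q9) and (Q11) its two sides even receive equal values; (Q10) holds because 1 is
   the largest value.  The rules preserve v p <= v q since the clipped difference is monotone,
   and since every theorem is an implication its second component is 0. *)

lemma provable_Imp: "provable p \<Longrightarrow> \<exists>a b. p = Imp a b"
  by (induction rule: provable.induct) (auto elim: axiom.cases)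

context
  fixes v :: "fm \<Rightarrow> real \<times> real"
  assumes v: "valuation v"
begin

lemma valuation_simps:
  "v One = (1, 0)"
  "v (Neg p) = (- fst (v p), - snd (v p))"
  "v (Imp p q) = (min 1 (max (-1) (fst (v q) - fst (v p))), 0)"
  "v (Pls p) = (max 0 (fst (v p)), snd (v p))"
  "v (Mns p) = (min 0 (fst (v p)), snd (v p))"
  using v unfolding valuation_def by auto

lemma fst_valuation_bounds: "-1 \<le> fst (v p)" "fst (v p) \<le> 1"
  using v unfolding valuation_def by auto

lemma fst_valuation_Imp_nonneg_iff: "0 \<le> fst (v (Imp p q)) \<longleftrightarrow> fst (v p) \<le> fst (v q)"
  by (auto simp: valuation_simps)

lemma fst_valuation_Imp_mono:
  assumes "fst (v p') \<le> fst (v p)" "fst (v q) \<le> fst (v q')"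
  shows "fst (v (Imp p q)) \<le> fst (v (Imp p' q'))"
  using assms by (simp add: valuation_simps min_def max_def)

lemma fst_valuation_Disj: "fst (v (Disj p q)) = max (fst (v p)) (fst (v q))"
  using fst_valuation_bounds[of p] fst_valuation_bounds[of q]
  by (simp add: Disj_def valuation_simps min_def max_def)

lemma fst_valuation_Imp_Neg_Neg: "fst (v (Imp (Neg q) (Neg p))) = fst (v (Imp p q))"
  by (simp add: valuation_simps)

lemma fst_valuation_One_Imp_Imp_One: "fst (v (Imp (Imp One p) One)) = fst (v One)"
  using fst_valuation_bounds[of p] by (simp add: valuation_simps)

lemma fst_valuation_Imp_self_Imp: "fst (v (Imp (Imp q q) p)) = fst (v p)"
  using fst_valuation_bounds[of p] by (simp add: valuation_simps)

lemma fst_valuation_Pls_Imp_Mns: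
  "fst (v (Imp (Imp (Pls q) (Mns p)) (Imp (Pls p) (Mns q)))) = fst (v (Imp p q))"
  using fst_valuation_bounds[of p] fst_valuation_bounds[of q]
  by (simp add: valuation_simps min_def max_def)

lemma fst_valuation_Neg_Imp: "fst (v (Neg (Imp p q))) = fst (v (Imp q p))"
  by (simp add: valuation_simps min_def max_def)

lemma fst_valuation_Pls_Imp_Neg:
  "fst (v (Pls (Imp p (Imp (Neg p) q)))) = fst (v (Imp (Pls p) (Imp (Neg (Pls p)) (Pls q))))"
  using fst_valuation_bounds[of p] fst_valuation_bounds[of q]
  by (simp add: valuation_simps min_def max_def)

lemma fst_valuation_Imp_Disj: "fst (v (Imp p (Disj q r))) = fst (v (Disj (Imp p r) (Imp p q)))"
  by (simp add: fst_valuation_Disj valuation_simps min_def max_def)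

lemma fst_valuation_Disj_assoc: "fst (v (Disj p (Disj q r))) = fst (v (Disj (Disj p q) r))"
  by (simp add: fst_valuation_Disj max.assoc)

lemma fst_valuation_Imp_One_exchange:
  "fst (v (Imp (Imp p One) (Imp (Imp q One) r))) = fst (v (Imp (Imp q One) (Imp (Imp p One) r)))"
  using fst_valuation_bounds[of p] fst_valuation_bounds[of q] fst_valuation_bounds[of r]
  by (simp add: valuation_simps min_def max_def)

lemma fst_valuation_Imp_One_Imp_One: "fst (v (Imp (Imp p One) One)) = fst (v (Pls p))"
  using fst_valuation_bounds[of p] by (simp add: valuation_simps min_def max_def)

lemma fst_valuation_Imp_Neg_One_Imp_Neg_One:
  "fst (v (Imp (Imp p (Neg One)) (Neg One))) = fst (v (Mns p))"
  using fst_valuation_bounds[of p] by (simp add: valuation_simps min_def max_def)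

lemmas fst_valuation_axiom_sides_eq =
  fst_valuation_Imp_Neg_Neg fst_valuation_One_Imp_Imp_One fst_valuation_Imp_self_Imp
  fst_valuation_Pls_Imp_Mns fst_valuation_Neg_Imp fst_valuation_Pls_Imp_Neg
  fst_valuation_Imp_Disj fst_valuation_Disj_assoc fst_valuation_Imp_One_exchange
  fst_valuation_Imp_One_Imp_One fst_valuation_Imp_Neg_One_Imp_Neg_One

lemma fst_valuation_axiom_nonneg:
  assumes "axiom p"
  shows "0 \<le> fst (v p)"
  using assms
  by cases
    (simp_all only: fst_valuation_Imp_nonneg_iff,
     simp_all only: fst_valuation_axiom_sides_eq order_refl,
     simp add: valuation_simps fst_valuation_bounds)

lemma fst_valuation_provable_nonneg:
  assumes "provable p"
  shows "0 \<le> fst (v p)"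
  using assms
proof induction
  case (ax p)
  then show ?case by (rule fst_valuation_axiom_nonneg)
next
  case (R1 p q r)
  then have "0 \<le> fst (v q)"
    by (simp add: fst_valuation_Imp_nonneg_iff)
  then show ?case
    by (simp add: fst_valuation_Imp_self_Imp)
next
  case (R2 r p q)
  then show ?case
    by (simp add: fst_valuation_Imp_nonneg_iff fst_valuation_Imp_self_Imp)
next
  case (R3 p q r t)
  then show ?case
    by (simp add: fst_valuation_Imp_nonneg_iff fst_valuation_Imp_mono)
qed

end

theorem proposition5p6:
  fixes p :: fm
  assumes "provable p"
  shows "tautology p"
  unfolding tautology_def
proof (intro allI impI)
  fix v
  assume v: "valuation v"
  obtain a b where "p = Imp a b"
    using provable_Imp[OF assms] by blast
  then have "snd (v p) = 0"
    by (simp add: valuation_simps[OF v])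
  moreover have "0 \<le> fst (v p)"
    using fst_valuation_provable_nonneg[OF v assms] .
  ultimately show "fst (v p) \<in> {0..1} \<and> snd (v p) \<in> {0..1}"
    using fst_valuation_bounds[OF v, of p] by simp
qed

end
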